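(* Let $x_*\in\Omega$, $R>0$, $c:=\|F(x_* )\|$, $\beta:=\|F'(x_* )^\dagger\|$, $\kappa:=\sup\{t\in[0,R):B(x_*,t)\subset\Omega\}$. Suppose $F'(x_* )^*F(x_* )=0$, $F'(x_* )$ is injective, and there exists $K>0$ with $$\alpha:=\sqrt2c\beta^2K<1,\qquad \|F'(x)-F'(y)\|\le K\|x-y\|\quad\forall\,x,y\in B(x_*,\kappa).$$ Take $0\le\vartheta<1$, $0\le\omega_2<\omega_1$ with $\omega_1(\alpha+\alpha\vartheta+\vartheta)+\omega_2<1$, and let $$r:=\min\Big\{\kappa,\ \frac{2(1-\omega_1\vartheta-\omega_2)-2\sqrt2cK\beta^2\omega_1(1+\vartheta)}{\beta K(2+\omega_1-\vartheta\omega_1-2\omega_2)}\Big\}.$$ Let $x_0\in B(x_*,r)\setminus\{x_*\}$ and $x_{k+1}=x_k+S_k$, $B(x_k)S_k=-F'(x_k)^*F(x_k)+r_k$, where for each $k$: $B(x_k):\mathbb X\to\mathbb X$ is invertible bounded linear with $\|B(x_k)^{-1}F'(x_k)^*F'(x_k)\|\le\omega_1$ and $\|B(x_k)^{-1}F'(x_k)^*F'(x_k)-I\|\le\omega_2$; $P_k:\mathbb X\to\mathbb X$ is invertible bounded linear; $\theta_k\ge0$, $r_k\in\mathbb X$ satisfy $\|P_kr_k\|\le\theta_k\|P_kF'(x_k)^*F(x_k)\|$ and $0\le\theta_k\,\mathrm{cond}(P_kF'(x_k)^*F'(x_k))\le\vartheta$. Then $\{x_k\}$ is well defined, contained in $B(x_*,r)$,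 converges to $x_*$, and for all $k\ge0$, $$\|x_{k+1}-x_*\|\le\frac{(1+\vartheta)\beta\omega_1K}{2(1-\beta K\|x_0-x_*\|)}\|x_k-x_*\|^2+\Big(\frac{(1+\vartheta)\omega_1\sqrt2c\beta^2K}{1-\beta K\|x_0-x_*\|}+\omega_1\vartheta+\omega_2\Big)\|x_k-x_*\|.$$
   Context: $\mathbb X,\mathbb Y$ are real or complex Hilbert spaces, $\Omega\subseteq\mathbb X$ is open, and $F:\Omega\to\mathbb Y$ is continuously differentiable with $F'(x)$ having closed image for every $x\in\Omega$. $A^*$ denotes the adjoint; for a continuous injective linear operator $A$ with closed image, $A^\dagger:=(A^*A)^{-1}A^*$. $\mathrm{cond}(A):=\|A\|\|A^{-1}\|$. $B(a,\delta)$ is the open ball. *)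

theory Defs
  imports "HOL-Analysis.Analysis"
begin

definition bl_adj :: "('a::real_inner \<Rightarrow>\<^sub>L 'b::real_inner) \<Rightarrow> ('b \<Rightarrow>\<^sub>L 'a)" where
  "bl_adj A = Blinfun (adjoint (blinfun_apply A))"

definition bl_invertible :: "('a::real_normed_vector \<Rightarrow>\<^sub>L 'b::real_normed_vector) \<Rightarrow> bool" where
  "bl_invertible A \<longleftrightarrow> (\<exists>B. A o\<^sub>L B = id_blinfun \<and> B o\<^sub>L A = id_blinfun)"

definition bl_inv :: "('a::real_normed_vector \<Rightarrow>\<^sub>L 'b::real_normed_vector) \<Rightarrow> ('b \<Rightarrow>\<^sub>L 'a)" where
  "bl_inv A = (SOME B. A o\<^sub>L B = id_blinfun \<and> B o\<^sub>L A = id_blinfun)"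

text \<open>Moore-Penrose pseudo-inverse of an injective operator with closed image:
  A^dagger = (A^* A)^{-1} A^*.\<close>
definition bl_pinv :: "('a::real_inner \<Rightarrow>\<^sub>L 'b::real_inner) \<Rightarrow> ('b \<Rightarrow>\<^sub>L 'a)" where
  "bl_pinv A = bl_inv (bl_adj A o\<^sub>L A) o\<^sub>L bl_adj A"

definition bl_cond :: "('a::real_normed_vector \<Rightarrow>\<^sub>L 'a) \<Rightarrow> ereal" where
  "bl_cond A = (if bl_invertible A then ereal (norm A * norm (bl_inv A)) else \<infinity>)"

end

theory Submission
  imports Defs
begin

text \<open>The analytic core is a one-step estimate: writing the step through solutions of normal equations,
  perturbation bounds for least squares solutions (using \<open>\<parallel>F'(x) - F'(x\<^sub>*)\<parallel> \<le> K \<parallel>x - x\<^sub>*\<parallel>\<close>),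
  the inexactness bound from the condition number, and the Taylor remainder of \<open>F\<close>, give
  \<open>e\<^sub>k\<^sub>+\<^sub>1 \<le> a e\<^sub>k\<^sup>2 + b e\<^sub>k\<close> for the errors \<open>e\<^sub>k = \<parallel>x\<^sub>k - x\<^sub>*\<parallel>\<close>.  The choice of the radius makes the
  contraction factor \<open>a e\<^sub>0 + b\<close> smaller than one, and a scalar recursion lemma yields that the
  iterates stay in the ball and converge; the main theorem only instantiates these results.\<close>

lemma norm_diff_scaleR_sq:
  fixes w v :: "'a::real_inner"
  shows "norm (w - s *\<^sub>R v)^2 = norm w^2 - 2 * s * inner w v + s^2 * norm v^2"
  unfolding power2_norm_eq_inner
  by (simp add: inner_diff_left inner_diff_right inner_commute power2_eq_square algebra_simps)

text \<open>The parallelogram law, centred at an arbitrary point \<open>u\<close>: it shows that minimising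
  sequences for the distance to a subspace are Cauchy.\<close>
lemma parallelogram_midpoint:
  fixes u a b :: "'a::real_inner"
  shows "norm (a - b)^2 = 2 * norm (u - a)^2 + 2 * norm (u - b)^2 - 4 * norm (u - (a + b) /\<^sub>R 2)^2"
  unfolding power2_norm_eq_inner
  by (simp add: inner_diff inner_add algebra_simps inner_commute)

lemma closed_subspace_nearest_point:
  fixes V :: "'a::{real_inner,complete_space} set"
  assumes sub: "subspace V" and cl: "closed V"
  shows "\<exists>p\<in>V. \<forall>v\<in>V. norm (u - p) \<le> norm (u - v)"
proof -
  define d where "d = Inf ((\<lambda>v. norm (u - v)^2) ` V)"
  have V0: "0 \<in> V" using sub by (rule subspace_0)
  have d_le: "d \<le> norm (u - v)^2" if "v \<in> V" for v
    unfolding d_def using that by (intro cInf_lower) (auto intro!: bdd_belowI[of _ 0])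
  have "\<exists>v\<in>V. norm (u - v)^2 < d + 1 / Suc n" for n :: nat
    using cInf_lessD[of "(\<lambda>v. norm (u - v)^2) ` V" "d + 1 / Suc n"] V0 unfolding d_def by auto
  then obtain w where w: "\<And>n. w n \<in> V" "\<And>n. norm (u - w n)^2 < d + 1 / Suc n" by metis
  have w_close: "norm (w m - w n)^2 \<le> 2 / Suc m + 2 / Suc n" for m n
  proof -
    have "(w m + w n) /\<^sub>R 2 \<in> V" using sub w(1) by (simp add: subspace_add subspace_scale)
    hence "d \<le> norm (u - (w m + w n) /\<^sub>R 2)^2" by (rule d_le)
    with parallelogram_midpoint[of "w m" "w n" u] w(2)[of m] w(2)[of n] show ?thesis by linarith
  qed
  have "Cauchy w"
  proof (rule metric_CauchyI)
    fix e :: real assume e: "e > 0"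
    obtain M :: nat where M: "4 / e^2 < M" using reals_Archimedean2 by blast
    have M_pos: "0 < real M" using M e by (smt (verit) divide_pos_pos zero_less_power)
    have "dist (w m) (w n) < e" if "M \<le> m" "M \<le> n" for m n
    proof -
      have "2 / Suc m \<le> 2 / M" "2 / Suc n \<le> 2 / M"
        using that M_pos by (auto intro!: divide_left_mono)
      moreover have "4 / M < e^2" using M M_pos e by (simp add: field_simps)
      ultimately have "norm (w m - w n)^2 < e^2" using w_close[of m n] by linarith
      thus ?thesis using e by (simp add: dist_norm power_less_imp_less_base)
    qed
    thus "\<exists>M. \<forall>m\<ge>M. \<forall>n\<ge>M. dist (w m) (w n) < e" by blast
  qed
  then obtain p where lim: "w \<longlonglongrightarrow> p" using complete_UNIV convergent_eq_Cauchy by blast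
  have "p \<in> V" using cl w(1) lim by (meson closed_sequentially)
  have "(\<lambda>n. d + 1 / Suc n) \<longlonglongrightarrow> d + 0"
    by (intro tendsto_intros LIMSEQ_inverse_real_of_nat[unfolded inverse_eq_divide])
  moreover have "(\<lambda>n. norm (u - w n)^2) \<longlonglongrightarrow> norm (u - p)^2"
    by (intro tendsto_intros lim)
  ultimately have "norm (u - p)^2 \<le> d"
    using w(2) by (intro LIMSEQ_le[of "\<lambda>n. norm (u - w n)^2" _ "\<lambda>n. d + 1 / Suc n"])
      (auto intro: less_imp_le)
  hence "\<forall>v\<in>V. norm (u - p) \<le> norm (u - v)"
    using d_le by (meson norm_ge_zero order_trans power2_le_imp_le)
  with \<open>p \<in> V\<close> show ?thesis by blast
qed

lemma nearest_point_orthogonal: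
  fixes V :: "'a::real_inner set"
  assumes sub: "subspace V" and p: "p \<in> V" and near: "\<forall>v\<in>V. norm (u - p) \<le> norm (u - v)"
    and v: "v \<in> V"
  shows "inner (u - p) v = 0"
proof -
  define a where "a = inner (u - p) v"
  define n where "n = norm v ^ 2"
  define t where "t = a / (n + 1)"
  have n0: "n \<ge> 0" by (simp add: n_def)
  have "p + t *\<^sub>R v \<in> V" using sub p v by (simp add: subspace_add subspace_scale)
  hence "norm (u - p) ^ 2 \<le> norm ((u - p) - t *\<^sub>R v) ^ 2"
    using near by (metis diff_diff_eq norm_ge_zero power_mono)
  also have "\<dots> = norm (u - p) ^ 2 - 2 * t * a + t ^ 2 * n"
    unfolding a_def n_def by (rule norm_diff_scaleR_sq)
  finally have "2 * (t * a) \<le> (t * a) * (n / (n + 1))"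
    using n0 by (simp add: t_def power2_eq_square field_simps)
  moreover have "t * a \<ge> 0" "n / (n + 1) \<le> 1" using n0 by (simp_all add: t_def)
  ultimately have "t * a \<le> 0" by (smt (verit) mult_left_le)
  hence "a\<^sup>2 / (n + 1) \<le> 0" by (simp add: t_def power2_eq_square)
  hence "a\<^sup>2 \<le> 0" using n0 by (simp add: divide_le_0_iff)
  thus ?thesis by (simp add: a_def)
qed

lemma closed_subspace_projection:
  fixes V :: "'a::{real_inner,complete_space} set"
  assumes "subspace V" and "closed V"
  shows "\<exists>p\<in>V. \<forall>v\<in>V. inner (u - p) v = 0"
  using closed_subspace_nearest_point[OF assms, of u] nearest_point_orthogonal[OF assms(1)] by blast

lemma riesz_representation:
  fixes \<phi> :: "'a::{real_inner,complete_space} \<Rightarrow> real"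
  assumes bl: "bounded_linear \<phi>"
  shows "\<exists>g. \<forall>x. \<phi> x = inner x g"
proof (cases "\<forall>x. \<phi> x = 0")
  case True thus ?thesis by (intro exI[of _ 0]) simp
next
  case False
  then obtain u where u: "\<phi> u \<noteq> 0" by blast
  interpret bounded_linear \<phi> by fact
  define V where "V = {x. \<phi> x = 0}"
  have sub: "subspace V" unfolding V_def subspace_def by (simp add: add scaleR)
  have cl: "closed V" unfolding V_def
    by (intro closed_Collect_eq continuous_intros) (simp_all add: linear_continuous_on bl)
  obtain p where p: "p \<in> V" "\<And>v. v \<in> V \<Longrightarrow> inner (u - p) v = 0"
    using closed_subspace_projection[OF sub cl, of u] by blast
  define w where "w = u - p"
  have \<phi>w: "\<phi> w = \<phi> u" using p(1) by (simp add: w_def V_def diff)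
  hence "w \<noteq> 0" using u by (auto simp: zero)
  have "\<phi> x = inner x ((\<phi> w / inner w w) *\<^sub>R w)" for x
  proof -
    have "x - (\<phi> x / \<phi> w) *\<^sub>R w \<in> V" using \<phi>w u by (simp add: V_def diff scaleR)
    hence "inner w (x - (\<phi> x / \<phi> w) *\<^sub>R w) = 0" using p(2) w_def by blast
    hence "inner w x = (\<phi> x / \<phi> w) * inner w w" by (simp add: inner_diff_right)
    thus ?thesis using \<open>w \<noteq> 0\<close> \<phi>w u by (simp add: field_simps inner_commute)
  qed
  thus ?thesis by blast
qed

text \<open>Hence every bounded linear map on a Hilbert space has an adjoint; the library proves
  this only for Euclidean spaces.\<close>
lemma adjoint_works_complete:
  fixes f :: "'a::{real_inner,complete_space} \<Rightarrow> 'b::real_inner"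
  assumes bl: "bounded_linear f"
  shows "inner (f x) y = inner x (adjoint f y)"
proof -
  have "\<exists>g. \<forall>x. inner (f x) y = inner x g" for y
    by (intro riesz_representation bounded_linear_compose[OF bounded_linear_inner_left bl])
  then obtain g where "\<forall>x y. inner (f x) y = inner x (g y)" by metis
  hence "\<forall>x y. inner (f x) y = inner x (adjoint f y)"
    unfolding adjoint_def by (rule someI[where P="\<lambda>f'. \<forall>x y. f x \<bullet> y = x \<bullet> f' y"])
  thus ?thesis by blast
qed

lemma adjoint_bounded_linear_complete:
  fixes f :: "'a::{real_inner,complete_space} \<Rightarrow> 'b::real_inner"
  assumes bl: "bounded_linear f"
  shows "bounded_linear (adjoint f)"
proof -
  note adj = adjoint_works_complete[OF bl]
  have eq: "a = b" if "\<And>x. inner x a = inner x b" for a b :: 'a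
  proof -
    have "inner (a - b) (a - b) = 0" using that[of "a - b"] by (simp add: inner_diff_right)
    thus ?thesis by simp
  qed
  have lin: "linear (adjoint f)"
    by standard (rule eq; simp add: adj[symmetric] inner_add_right)+
  obtain C where C: "\<And>x. norm (f x) \<le> norm x * C" "C > 0"
    using bounded_linear.pos_bounded[OF bl] by blast
  have "norm (adjoint f y) \<le> norm y * C" for y
  proof -
    have "norm (adjoint f y)^2 = inner (f (adjoint f y)) y"
      by (simp add: adj power2_norm_eq_inner)
    also have "\<dots> \<le> norm (f (adjoint f y)) * norm y" by (rule norm_cauchy_schwarz)
    also have "\<dots> \<le> norm (adjoint f y) * (norm y * C)"
      using mult_right_mono[OF C(1)[of "adjoint f y"] norm_ge_zero[of y]] by (simp add: mult_ac)
    finally show ?thesis using C(2) by (cases "adjoint f y = 0") (auto simp: power2_eq_square)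
  qed
  with lin show ?thesis
    unfolding bounded_linear_def bounded_linear_axioms_def by blast
qed

lemma bl_adj_inner:
  fixes A :: "'a::{real_inner,complete_space} \<Rightarrow>\<^sub>L 'b::real_inner"
  shows "inner (A x) y = inner x (bl_adj A y)"
proof -
  have "blinfun_apply (bl_adj A) = adjoint (blinfun_apply A)"
    unfolding bl_adj_def
    by (rule bounded_linear_Blinfun_apply[OF adjoint_bounded_linear_complete[OF blinfun.bounded_linear_right]])
  thus ?thesis using adjoint_works_complete[OF blinfun.bounded_linear_right] by simp
qed

lemma bl_inv_apply:
  assumes "bl_invertible A"
  shows "A (bl_inv A y) = y" "bl_inv A (A x) = x"
proof -
  have "A o\<^sub>L bl_inv A = id_blinfun \<and> bl_inv A o\<^sub>L A = id_blinfun"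
    using assms unfolding bl_invertible_def bl_inv_def by (rule someI_ex)
  hence "(A o\<^sub>L bl_inv A) y = y" "(bl_inv A o\<^sub>L A) x = x" by simp_all
  thus "A (bl_inv A y) = y" "bl_inv A (A x) = x" by simp_all
qed

text \<open>Baire category step of the open mapping theorem: the closed range is covered by the closures
  of the images of the balls \<open>cball 0 n\<close>, so one of them contains a relative ball of the range.\<close>
lemma closed_range_baire:
  fixes T :: "'a::real_normed_vector \<Rightarrow> 'b::{real_normed_vector,complete_space}"
  assumes bl: "bounded_linear T" and cl: "closed (range T)"
  shows "\<exists>n::nat. \<exists>y0 \<in> closure (T ` cball 0 (real n)). \<exists>\<epsilon>>0.
           \<forall>y\<in>range T. dist y y0 < \<epsilon> \<longrightarrow> y \<in> closure (T ` cball 0 (real n))"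
proof -
  interpret bounded_linear T by fact
  define C where "C n = closure (T ` cball 0 (real n))" for n :: nat
  define X where "X = top_of_set (range T)"
  have C_range: "C n \<subseteq> range T" for n
    unfolding C_def using cl by (simp add: closure_minimal image_mono)
  have C_closed: "closedin X (C n)" for n
    unfolding X_def C_def using C_range[of n]
    by (metis C_def closed_closure closedin_closed inf.absorb_iff2)
  have C_cover: "\<Union>(range C) = range T"
  proof
    show "range T \<subseteq> \<Union> (range C)"
    proof
      fix y assume "y \<in> range T"
      then obtain x where x: "y = T x" by blast
      obtain n :: nat where "norm x \<le> n" using real_arch_simple by blast
      hence "y \<in> C n" unfolding C_def using x by (auto intro!: closure_subset[THEN subsetD])
      thus "y \<in> \<Union> (range C)" by blast
    qed
  qed (use C_range in blast)
  have "completely_metrizable_space X" unfolding X_def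
    by (rule completely_metrizable_space_closedin[OF completely_metrizable_space_euclidean])
       (simp add: cl)
  moreover have "X interior_of \<Union>(range C) \<noteq> {}"
    using C_cover zero by (metis X_def empty_iff interior_of_topspace rangeI
        topspace_euclidean_subtopology)
  ultimately have "\<exists>n. X interior_of C n \<noteq> {}"
    using C_closed Baire_category_alt[of X "range C"] by auto
  then obtain n y0 where y0: "y0 \<in> X interior_of C n" by blast
  moreover have "openin X (X interior_of C n)" by simp
  ultimately obtain \<epsilon> where "\<epsilon> > 0" "\<forall>y\<in>range T. dist y y0 < \<epsilon> \<longrightarrow> y \<in> X interior_of C n"
    unfolding X_def openin_euclidean_subtopology_iff by blast
  moreover have "X interior_of C n \<subseteq> C n" by (rule interior_of_subset)
  ultimately show ?thesis using y0 unfolding C_def by blast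
qed

lemma approx_preimage_rescale:
  fixes T :: "'a::real_normed_vector \<Rightarrow> 'b::real_normed_vector"
  assumes bl: "bounded_linear T" and e: "\<epsilon> > 0"
    and small: "\<And>y \<delta>. y \<in> range T \<Longrightarrow> norm y < \<epsilon> \<Longrightarrow> \<delta> > 0 \<Longrightarrow>
                  \<exists>x. norm x \<le> C \<and> norm (T x - y) < \<delta>"
    and y: "y \<in> range T" and d: "\<delta> > 0"
  shows "\<exists>x. norm x \<le> 2 * C / \<epsilon> * norm y \<and> norm (T x - y) < \<delta>"
proof (cases "y = 0")
  case True thus ?thesis using d by (intro exI[of _ 0]) (simp add: linear_simps(3)[OF bl])
next
  case False
  interpret bounded_linear T by fact
  define s where "s = \<epsilon> / (2 * norm y)"
  have s: "s > 0" using False e by (simp add: s_def)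
  have "s *\<^sub>R y \<in> range T" using y by (metis rangeE rangeI scaleR)
  moreover have "norm (s *\<^sub>R y) < \<epsilon>" using s e False by (simp add: s_def)
  ultimately obtain x' where x': "norm x' \<le> C" "norm (T x' - s *\<^sub>R y) < s * \<delta>"
    using small s d by (meson mult_pos_pos)
  have "norm (x' /\<^sub>R s) = norm x' / s" using s by (simp add: divide_inverse_commute)
  also have "\<dots> \<le> C / s" using x' s by (simp add: divide_right_mono)
  also have "\<dots> = 2 * C / \<epsilon> * norm y" using False e by (simp add: s_def field_simps)
  finally have "norm (x' /\<^sub>R s) \<le> 2 * C / \<epsilon> * norm y" .
  moreover have "T (x' /\<^sub>R s) - y = (T x' - s *\<^sub>R y) /\<^sub>R s" using s by (simp add: scaleR algebra_simps)
  hence "norm (T (x' /\<^sub>R s) - y) = norm (T x' - s *\<^sub>R y) / s"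
    using s by (simp add: divide_inverse_commute)
  hence "norm (T (x' /\<^sub>R s) - y) < \<delta>" using x' s by (simp add: divide_less_eq mult.commute)
  ultimately show ?thesis by blast
qed

lemma closed_range_approx_preimage:
  fixes T :: "'a::real_normed_vector \<Rightarrow> 'b::{real_normed_vector,complete_space}"
  assumes bl: "bounded_linear T" and cl: "closed (range T)"
  shows "\<exists>M\<ge>0. \<forall>y\<in>range T. \<forall>\<delta>>0. \<exists>x. norm x \<le> M * norm y \<and> norm (T x - y) < \<delta>"
proof -
  interpret bounded_linear T by fact
  obtain n :: nat and y0 \<epsilon> where y0: "y0 \<in> closure (T ` cball 0 (real n))" and e: "\<epsilon> > 0"
    and ball: "\<forall>y\<in>range T. dist y y0 < \<epsilon> \<longrightarrow> y \<in> closure (T ` cball 0 (real n))"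
    using closed_range_baire[OF bl cl] by blast
  have y0_range: "y0 \<in> range T" using y0 cl closure_minimal[of "T ` cball 0 (real n)" "range T"] by blast
  \<comment> \<open>Small vectors of the range have approximate preimages of norm at most \<open>2 n\<close>: write them as
    differences of two points of the closure of \<open>T ` cball 0 n\<close>.\<close>
  have small: "\<exists>x. norm x \<le> 2 * n \<and> norm (T x - y) < \<delta>"
    if y: "y \<in> range T" "norm y < \<epsilon>" and d: "\<delta> > 0" for y \<delta>
  proof -
    obtain a0 b0 where "y0 = T a0" "y = T b0" using y y0_range by blast
    hence "y0 + y = T (a0 + b0)" by (simp add: add)
    hence "y0 + y \<in> range T" by blast
    moreover have "dist (y0 + y) y0 < \<epsilon>" using y by (simp add: dist_norm)
    ultimately have "y0 + y \<in> closure (T ` cball 0 (real n))" using ball by blast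
    then obtain a where a: "a \<in> cball 0 (real n)" "dist (T a) (y0 + y) < \<delta>/2"
      using d unfolding closure_approachable by (metis half_gt_zero image_iff)
    obtain b where b: "b \<in> cball 0 (real n)" "dist (T b) y0 < \<delta>/2"
      using d y0 unfolding closure_approachable by (metis half_gt_zero image_iff)
    have "norm (a - b) \<le> 2 * n" using a b norm_triangle_ineq4[of a b] by simp
    moreover have "T (a - b) - y = (T a - (y0 + y)) - (T b - y0)" by (simp add: diff algebra_simps)
    hence "norm (T (a - b) - y) \<le> dist (T a) (y0 + y) + dist (T b) y0"
      by (metis dist_norm norm_triangle_ineq4)
    hence "norm (T (a - b) - y) < \<delta>" using a b by linarith
    ultimately show ?thesis by blast
  qed
  have "\<exists>x. norm x \<le> 2 * real (2 * n) / \<epsilon> * norm y \<and> norm (T x - y) < \<delta>"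
    if "y \<in> range T" "\<delta> > 0" for y \<delta>
    using approx_preimage_rescale[OF bl e small that] .
  moreover have "0 \<le> 2 * real (2 * n) / \<epsilon>" using e by simp
  ultimately show ?thesis by blast
qed

text \<open>The library states the next two facts for the class \<open>banach\<close>, which is not inferred from
  the sort \<open>{real_normed_vector, complete_space}\<close>.\<close>
lemma summable_norm_cancel_complete:
  fixes f :: "nat \<Rightarrow> 'a::{real_normed_vector,complete_space}"
  assumes "summable (\<lambda>n. norm (f n))"
  shows "summable f"
proof -
  have "Cauchy (\<lambda>n. sum f {..<n})"
  proof (rule metric_CauchyI)
    fix e :: real assume e: "e > 0"
    obtain N where N: "\<forall>m\<ge>N. \<forall>n. norm (sum (\<lambda>k. norm (f k)) {m..<n}) < e"
      using assms[unfolded summable_Cauchy] e by blast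
    have close: "dist (sum f {..<m}) (sum f {..<n}) < e" if "N \<le> m" "m \<le> n" for m n
    proof -
      have "dist (sum f {..<m}) (sum f {..<n}) = norm (sum f {m..<n})"
        using that by (metis dist_norm dist_commute sum_diff_nat_ivl lessThan_atLeast0 zero_le)
      also have "\<dots> \<le> sum (\<lambda>k. norm (f k)) {m..<n}" by (rule norm_sum)
      also have "\<dots> \<le> norm (sum (\<lambda>k. norm (f k)) {m..<n})" by simp
      also have "\<dots> < e" using N that by blast
      finally show ?thesis .
    qed
    show "\<exists>M. \<forall>m\<ge>M. \<forall>n\<ge>M. dist (sum f {..<m}) (sum f {..<n}) < e"
      using close by (metis dist_commute nle_le)
  qed
  then obtain s where "(\<lambda>n. sum f {..<n}) \<longlonglongrightarrow> s"
    using complete_UNIV convergent_eq_Cauchy by blast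
  thus ?thesis unfolding summable_def sums_def by blast
qed

lemma summable_norm_complete:
  fixes f :: "nat \<Rightarrow> 'a::{real_normed_vector,complete_space}"
  assumes sn: "summable (\<lambda>n. norm (f n))"
  shows "norm (suminf f) \<le> (\<Sum>n. norm (f n))"
proof -
  have "(\<lambda>n. norm (\<Sum>i<n. f i)) \<longlonglongrightarrow> norm (suminf f)"
    by (intro tendsto_norm summable_LIMSEQ summable_norm_cancel_complete[OF sn])
  moreover have "(\<lambda>n. \<Sum>i<n. norm (f i)) \<longlonglongrightarrow> (\<Sum>n. norm (f n))"
    by (rule summable_LIMSEQ[OF sn])
  ultimately show ?thesis by (rule LIMSEQ_le) (auto intro: norm_sum)
qed

text \<open>Successive approximation turns approximate preimages into exact ones (the core of the
  open mapping theorem): correct the residual with a preimage of half its size at each step.\<close>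
lemma approx_preimage_exact:
  fixes T :: "'a::{real_normed_vector,complete_space} \<Rightarrow> 'b::real_normed_vector"
  assumes bl: "bounded_linear T" and M: "M \<ge> 0"
    and approx: "\<forall>y\<in>range T. \<forall>\<delta>>0. \<exists>x. norm x \<le> M * norm y \<and> norm (T x - y) < \<delta>"
    and y: "y \<in> range T"
  shows "\<exists>x. T x = y \<and> norm x \<le> 2 * M * norm y"
proof (cases "y = 0")
  case True thus ?thesis by (intro exI[of _ 0]) (simp add: linear_simps(3)[OF bl])
next
  case False
  interpret bounded_linear T by fact
  define c where "c = norm y"
  have c: "c > 0" using False by (simp add: c_def)
  obtain g where g: "\<And>z \<delta>. z \<in> range T \<Longrightarrow> \<delta> > 0 \<Longrightarrow> norm (g z \<delta>) \<le> M * norm z \<and> norm (T (g z \<delta>) - z) < \<delta>"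
    using approx by metis
  \<comment> \<open>\<open>res k\<close> is the residual after \<open>k\<close> corrections, \<open>u k\<close> the \<open>k\<close>-th correction.\<close>
  define \<delta> where "\<delta> k = c * (1/2::real)^Suc k" for k
  define res where "res = rec_nat y (\<lambda>k z. z - T (g z (\<delta> k)))"
  define u where "u k = g (res k) (\<delta> k)" for k
  have res_Suc: "res (Suc k) = res k - T (u k)" for k by (simp add: res_def u_def)
  have res_bound: "res k \<in> range T \<and> norm (res k) \<le> c * (1/2)^k" for k
  proof (induction k)
    case 0 thus ?case using y by (simp add: res_def c_def)
  next
    case (Suc k)
    then obtain a where "res k = T a" by blast
    hence "res (Suc k) = T (a - u k)" by (simp add: res_Suc diff)
    moreover have "norm (T (u k) - res k) < \<delta> k"
      using g[of "res k" "\<delta> k"] Suc c by (simp add: u_def \<delta>_def)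
    hence "norm (res (Suc k)) \<le> c * (1/2)^Suc k" by (simp add: res_Suc norm_minus_commute \<delta>_def)
    ultimately show ?case by blast
  qed
  have u_bound: "norm (u k) \<le> (M * c) * (1/2)^k" for k
  proof -
    have "norm (u k) \<le> M * norm (res k)" using g res_bound c by (simp add: u_def \<delta>_def)
    also have "\<dots> \<le> M * (c * (1/2)^k)" using res_bound[of k] M by (simp add: mult_left_mono)
    finally show ?thesis by simp
  qed
  have geom: "summable (\<lambda>k. (M * c) * (1/2::real)^k)" by (intro summable_mult summable_geometric) simp
  have sn: "summable (\<lambda>k. norm (u k))"
    by (rule summable_comparison_test'[OF geom]) (use u_bound in simp)
  have "norm (suminf u) \<le> (\<Sum>k. (M * c) * (1/2::real)^k)"
    using summable_norm_complete[OF sn] suminf_le[OF u_bound sn geom] by linarith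
  also have "\<dots> = 2 * M * c" using suminf_geometric[of "1/2::real"] by (simp add: suminf_mult)
  finally have "norm (suminf u) \<le> 2 * M * norm y" by (simp add: c_def)
  moreover have "(\<lambda>k. T (u k)) sums y"
  proof -
    have "res \<longlonglongrightarrow> 0"
      by (rule Lim_null_comparison[of _ "\<lambda>k. c * (1/2::real)^k"])
         (use res_bound in \<open>auto intro!: tendsto_mult_right_zero LIMSEQ_realpow_zero\<close>)
    hence "(\<lambda>k. res k - res (Suc k)) sums (res 0 - 0)" by (rule telescope_sums')
    moreover have "(\<lambda>k. res k - res (Suc k)) = (\<lambda>k. T (u k))" by (simp add: res_Suc)
    moreover have "res 0 = y" by (simp add: res_def)
    ultimately show ?thesis by simp
  qed
  hence "T (suminf u) = y"
    using suminf[OF summable_norm_cancel_complete[OF sn]] by (simp add: sums_iff)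
  ultimately show ?thesis by blast
qed

lemma injective_closed_range_bounded_below:
  fixes T :: "'a::{real_normed_vector,complete_space} \<Rightarrow> 'b::{real_normed_vector,complete_space}"
  assumes bl: "bounded_linear T" and inj: "inj T" and cl: "closed (range T)"
  shows "\<exists>m>0. \<forall>x. m * norm x \<le> norm (T x)"
proof -
  obtain M where M: "M \<ge> 0" "\<forall>y\<in>range T. \<forall>\<delta>>0. \<exists>x. norm x \<le> M * norm y \<and> norm (T x - y) < \<delta>"
    using closed_range_approx_preimage[OF bl cl] by blast
  have "1 / (2 * M + 1) * norm x \<le> norm (T x)" for x
  proof -
    have "norm x \<le> 2 * M * norm (T x)"
      using approx_preimage_exact[OF bl M(1,2), of "T x"] inj by (auto dest: injD)
    hence "norm x \<le> 2 * M * norm (T x) + norm (T x)" using norm_ge_zero[of "T x"] by linarith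
    hence "norm x \<le> (2 * M + 1) * norm (T x)" by (simp add: algebra_simps)
    thus ?thesis using M(1) by (simp add: field_simps)
  qed
  moreover have "0 < 1 / (2 * M + 1)" using M by simp
  ultimately show ?thesis by blast
qed

lemma bounded_below_closed_range:
  fixes T :: "'a::{real_normed_vector,complete_space} \<Rightarrow> 'b::real_normed_vector"
  assumes bl: "bounded_linear T" and m: "m > 0" and below: "\<And>x. m * norm x \<le> norm (T x)"
  shows "closed (range T)"
proof (rule closed_sequential_limits[THEN iffD2], intro allI impI, elim conjE)
  interpret bounded_linear T by fact
  fix s l assume s_range: "\<forall>n. s n \<in> range T" and lim: "s \<longlonglongrightarrow> l"
  hence "\<forall>n. \<exists>y. s n = T y" by blast
  then obtain x where x: "\<And>n. s n = T (x n)" by (auto simp: choice_iff)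
  have "Cauchy x"
  proof (rule metric_CauchyI)
    fix e :: real assume e: "e > 0"
    obtain N where N: "\<forall>p\<ge>N. \<forall>q\<ge>N. dist (s p) (s q) < m * e"
      using LIMSEQ_imp_Cauchy[OF lim] m e by (meson metric_CauchyD mult_pos_pos)
    have "dist (x p) (x q) < e" if "N \<le> p" "N \<le> q" for p q
    proof -
      have "m * norm (x p - x q) \<le> norm (T (x p - x q))" by (rule below)
      also have "\<dots> < m * e" using N that by (simp add: x dist_norm diff)
      finally show ?thesis using m by (simp add: dist_norm)
    qed
    thus "\<exists>N. \<forall>p\<ge>N. \<forall>q\<ge>N. dist (x p) (x q) < e" by blast
  qed
  then obtain a where "x \<longlonglongrightarrow> a" using complete_UNIV convergent_eq_Cauchy by blast
  hence "s \<longlonglongrightarrow> T a" unfolding x by (intro tendsto)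
  hence "l = T a" by (rule LIMSEQ_unique[OF lim])
  thus "l \<in> range T" by blast
qed

lemma bounded_below_surj_invertible:
  fixes T :: "'a::real_normed_vector \<Rightarrow>\<^sub>L 'b::real_normed_vector"
  assumes m: "m > 0" and below: "\<And>x. m * norm x \<le> norm (T x)" and surj: "surj T"
  shows "bl_invertible T"
proof -
  have "inj T"
  proof (rule injI)
    fix a b assume "T a = T b"
    hence "m * norm (a - b) \<le> 0" using below[of "a - b"] by (simp add: blinfun.diff_right)
    thus "a = b" using m by (simp add: mult_le_0_iff)
  qed
  define S where "S = inv (blinfun_apply T)"
  have TS: "T (S y) = y" for y using surj by (simp add: S_def surj_f_inv_f)
  have ST: "S (T x) = x" for x using \<open>inj T\<close> by (simp add: S_def)
  have "linear S"
  proof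
    fix a b and c :: real
    have "T (S a + S b) = a + b" "T (c *\<^sub>R S a) = c *\<^sub>R a"
      by (simp_all add: blinfun.add_right blinfun.scaleR_right TS)
    thus "S (a + b) = S a + S b" "S (c *\<^sub>R a) = c *\<^sub>R S a" using ST by metis+
  qed
  moreover have "norm (S y) \<le> norm y * (1 / m)" for y
    using below[of "S y"] m by (simp add: TS field_simps)
  ultimately have "bounded_linear S"
    unfolding bounded_linear_def bounded_linear_axioms_def by blast
  hence "blinfun_apply (Blinfun S) = S" by (rule bounded_linear_Blinfun_apply)
  hence "T o\<^sub>L Blinfun S = id_blinfun \<and> Blinfun S o\<^sub>L T = id_blinfun"
    by (auto intro!: blinfun_eqI simp: TS ST)
  thus ?thesis unfolding bl_invertible_def by blast
qed

text \<open>For an injective operator \<open>D\<close> with closed range, the normal operator \<open>D\<^sup>* D\<close> is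
  invertible, so the pseudo-inverse \<open>D\<^sup>\<dagger> = (D\<^sup>* D)\<^sup>-\<^sup>1 D\<^sup>*\<close> is well defined.\<close>
lemma normal_operator_invertible:
  fixes D :: "'a::{real_inner,complete_space} \<Rightarrow>\<^sub>L 'b::{real_inner,complete_space}"
  assumes inj: "inj (blinfun_apply D)" and cl: "closed (range (blinfun_apply D))"
  shows "bl_invertible (bl_adj D o\<^sub>L D)"
proof -
  obtain m where m: "m > 0" "\<And>x. m * norm x \<le> norm (D x)"
    using injective_closed_range_bounded_below[OF blinfun.bounded_linear_right inj cl] by blast
  define T where "T = bl_adj D o\<^sub>L D"
  have T_inner: "inner (T x) z = inner (D x) (D z)" for x z
  proof -
    have "inner (T x) z = inner z (bl_adj D (D x))" by (simp add: T_def inner_commute)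
    also have "\<dots> = inner (D z) (D x)" by (rule bl_adj_inner[symmetric])
    finally show ?thesis by (simp add: inner_commute)
  qed
  have below: "m^2 * norm x \<le> norm (T x)" for x
  proof -
    have "m^2 * norm x * norm x = (m * norm x)^2" by (simp add: power2_eq_square)
    also have "\<dots> \<le> norm (D x)^2" using m by (simp add: power_mono)
    also have "\<dots> = inner (T x) x" by (simp add: T_inner power2_norm_eq_inner)
    also have "\<dots> \<le> norm (T x) * norm x" by (rule norm_cauchy_schwarz)
    finally show ?thesis by (cases "x = 0") auto
  qed
  have "m^2 > 0" using m by simp
  have "surj T"
  proof -
    have "subspace (range T)" using linear_subspace_image[OF bounded_linear.linear[OF blinfun.bounded_linear_right] subspace_UNIV] by simp
    moreover have "closed (range T)"
      using bounded_below_closed_range[OF blinfun.bounded_linear_right \<open>m^2 > 0\<close> below] .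
    ultimately have proj: "\<exists>p\<in>range T. \<forall>v\<in>range T. inner (y - p) v = 0" for y
      by (rule closed_subspace_projection)
    \<comment> \<open>The component of \<open>y\<close> orthogonal to the range of \<open>T\<close> lies in the kernel of \<open>D\<close>.\<close>
    have "y \<in> range T" for y
    proof -
      obtain p where p: "p \<in> range T" "\<forall>v\<in>range T. inner (y - p) v = 0" using proj by blast
      hence "inner (y - p) (T (y - p)) = 0" by blast
      hence "inner (T (y - p)) (y - p) = 0" by (simp add: inner_commute)
      hence "D (y - p) = 0" by (simp add: T_inner)
      hence "m * norm (y - p) \<le> 0" using m(2)[of "y - p"] by simp
      hence "y = p" using m(1) by (simp add: mult_le_0_iff)
      thus ?thesis using p(1) by simp
    qed
    thus ?thesis by blast
  qed
  with \<open>m^2 > 0\<close> below show ?thesis unfolding T_def by (rule bounded_below_surj_invertible)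
qed

text \<open>The pseudo-inverse is a left inverse, so its norm bounds \<open>\<parallel>z\<parallel>\<close> by \<open>\<parallel>D z\<parallel>\<close>.\<close>
lemma pinv_left_inverse_bound:
  fixes D :: "'a::{real_inner,complete_space} \<Rightarrow>\<^sub>L 'b::{real_inner,complete_space}"
  assumes inj: "inj (blinfun_apply D)" and cl: "closed (range (blinfun_apply D))"
  shows "norm z \<le> norm (bl_pinv D) * norm (D z)"
proof -
  have "bl_pinv D (D z) = z"
    using bl_inv_apply(2)[OF normal_operator_invertible[OF inj cl]] by (simp add: bl_pinv_def)
  hence "norm z = norm (bl_pinv D (D z))" by simp
  thus ?thesis using norm_blinfun[of "bl_pinv D" "D z"] by simp
qed

text \<open>If the preconditioned normal operator \<open>B\<^sup>-\<^sup>1 A\<^sup>* A\<close> is within \<open>\<omega> < 1\<close> of the identity,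
  the normal equations \<open>A\<^sup>* A z = y\<close> are solvable (Banach fixed point theorem).\<close>
lemma preconditioned_normal_equation_solvable:
  fixes A :: "'a::{real_inner,complete_space} \<Rightarrow>\<^sub>L 'b::{real_inner,complete_space}"
  assumes B: "bl_invertible B" and near_id: "norm ((bl_inv B o\<^sub>L bl_adj A o\<^sub>L A) - id_blinfun) \<le> \<omega>"
    and "\<omega> < 1"
  shows "\<exists>z. bl_adj A (A z) = y"
proof -
  define M where "M = bl_inv B o\<^sub>L bl_adj A o\<^sub>L A"
  define f where "f z = bl_inv B y - (M z - z)" for z
  have "0 \<le> \<omega>" using near_id norm_ge_zero order_trans by blast
  have "\<exists>!z\<in>UNIV. f z = z"
  proof (rule Banach_fix[OF complete_UNIV _ \<open>0 \<le> \<omega>\<close> \<open>\<omega> < 1\<close>])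
    fix a b :: 'a
    have "f a - f b = - ((M - id_blinfun) (a - b))"
      by (simp add: f_def blinfun.diff_right blinfun.diff_left algebra_simps)
    hence "dist (f a) (f b) = norm ((M - id_blinfun) (a - b))" by (simp add: dist_norm)
    also have "\<dots> \<le> norm (M - id_blinfun) * norm (a - b)" by (rule norm_blinfun)
    also have "\<dots> \<le> \<omega> * dist a b" using near_id unfolding M_def dist_norm
      by (simp add: mult_right_mono)
    finally show "dist (f a) (f b) \<le> \<omega> * dist a b" .
  qed auto
  then obtain z where "f z = z" by blast
  hence "bl_inv B (bl_adj A (A z)) = bl_inv B y" by (simp add: f_def M_def)
  hence "bl_adj A (A z) = y" by (metis bl_inv_apply(1)[OF B])
  thus ?thesis by blast
qed

lemma normal_equation_orthogonal:
  fixes A :: "'a::{real_inner,complete_space} \<Rightarrow>\<^sub>L 'b::real_inner"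
  assumes "bl_adj A (A z) = bl_adj A w"
  shows "inner (A v) (A z - w) = 0"
  using assms by (simp add: bl_adj_inner blinfun.diff_right)

lemma orthogonal_residual_norms:
  fixes a w :: "'a::real_inner"
  assumes "inner a (a - w) = 0"
  shows "norm a \<le> norm w" "norm (a - w) \<le> norm w"
proof -
  have "norm w ^ 2 = norm a ^ 2 + norm (w - a) ^ 2"
    using norm_add_Pythagorean[of a "w - a"] assms
    by (simp add: orthogonal_def inner_diff_right)
  thus "norm a \<le> norm w" "norm (a - w) \<le> norm w"
    by (simp_all add: norm_minus_commute power2_le_imp_le add_increasing2 add_increasing)
qed

lemma least_squares_solution_bound:
  fixes A D :: "'a::real_inner \<Rightarrow>\<^sub>L 'b::real_inner"
  assumes D_below: "\<And>z. norm z \<le> \<beta> * norm (D z)" and "\<beta> \<ge> 0"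
    and AD: "norm (A - D) \<le> \<delta>" and small: "\<beta> * \<delta> < 1"
    and orth: "inner (A z) (A z - w) = 0"
  shows "norm z \<le> \<beta> * norm w / (1 - \<beta> * \<delta>)"
proof -
  have ADz: "norm ((A - D) z) \<le> \<delta> * norm z"
    using order_trans[OF norm_blinfun mult_right_mono[OF AD norm_ge_zero]] .
  have "D z = A z - (A - D) z" by (simp add: blinfun.diff_left)
  hence "norm (D z) \<le> norm (A z) + norm ((A - D) z)" by (metis norm_triangle_ineq4)
  hence "norm (D z) \<le> norm w + \<delta> * norm z"
    using orthogonal_residual_norms(1)[OF orth] ADz by linarith
  hence "norm z \<le> \<beta> * (norm w + \<delta> * norm z)"
    using D_below[of z] mult_left_mono[OF _ \<open>\<beta> \<ge> 0\<close>] by (meson order_trans)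
  hence "norm z * (1 - \<beta> * \<delta>) \<le> \<beta> * norm w" by (simp add: algebra_simps)
  thus ?thesis using small by (simp add: field_simps)
qed

lemma least_squares_solution_bound_orth:
  fixes A D :: "'a::real_inner \<Rightarrow>\<^sub>L 'b::real_inner"
  assumes D_below: "\<And>z. norm z \<le> \<beta> * norm (D z)" and "\<beta> \<ge> 0"
    and AD: "norm (A - D) \<le> \<delta>" and small: "\<beta> * \<delta> < 1" and "\<delta> \<ge> 0"
    and orth: "inner (A z) (A z - w) = 0"
    and orth_D: "inner (D z) w = 0"
  shows "norm z \<le> \<beta> * (\<beta> * \<delta> * norm w) / (1 - \<beta> * \<delta>)"
proof -
  define p where "p = norm (D z)"
  have z_le: "norm z \<le> \<beta> * p" using D_below by (simp add: p_def)
  have "norm ((A - D) z) \<le> \<delta> * norm z"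
    using order_trans[OF norm_blinfun mult_right_mono[OF AD norm_ge_zero]] .
  hence AD_z: "norm ((A - D) z) \<le> \<delta> * (\<beta> * p)"
    using mult_left_mono[OF z_le \<open>\<delta> \<ge> 0\<close>] by linarith
  have "inner (D z) (A z) = - inner ((A - D) z) (A z - w)"
    using orth orth_D by (simp add: blinfun.diff_left inner_diff_left inner_diff_right)
  also have "\<dots> \<le> norm ((A - D) z) * norm (A z - w)"
    using norm_cauchy_schwarz[of "(A - D) z" "A z - w"] Cauchy_Schwarz_ineq2[of "(A - D) z" "A z - w"]
    by linarith
  also have "\<dots> \<le> \<delta> * (\<beta> * p) * norm w"
    using AD_z orthogonal_residual_norms(2)[OF orth] \<open>\<beta> \<ge> 0\<close> \<open>\<delta> \<ge> 0\<close>
    by (intro mult_mono) (auto simp: p_def)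
  finally have DA: "inner (D z) (A z) \<le> \<delta> * (\<beta> * p) * norm w" .
  have "p^2 = inner (D z) (A z) - inner (D z) ((A - D) z)"
    by (simp add: p_def power2_norm_eq_inner blinfun.diff_left inner_diff_right)
  also have "\<dots> \<le> \<delta> * (\<beta> * p) * norm w + p * (\<delta> * (\<beta> * p))"
    using DA Cauchy_Schwarz_ineq2[of "D z" "(A - D) z"] mult_left_mono[OF AD_z, of p]
    by (simp add: p_def)
  finally have "p * p \<le> p * ((\<beta> * \<delta>) * norm w + (\<beta> * \<delta>) * p)"
    by (simp add: power2_eq_square algebra_simps)
  hence "p \<le> (\<beta> * \<delta>) * norm w + (\<beta> * \<delta>) * p"
    by (cases "p = 0") (auto simp: p_def \<open>\<beta> \<ge> 0\<close> \<open>\<delta> \<ge> 0\<close>)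
  hence "p \<le> \<beta> * \<delta> * norm w / (1 - \<beta> * \<delta>)" using small by (simp add: field_simps)
  hence "\<beta> * p \<le> \<beta> * (\<beta> * \<delta> * norm w / (1 - \<beta> * \<delta>))" using \<open>\<beta> \<ge> 0\<close> by (rule mult_left_mono)
  thus ?thesis using z_le by simp
qed

lemma inexact_residual_solution:
  fixes A :: "'a::{real_inner,complete_space} \<Rightarrow>\<^sub>L 'b::{real_inner,complete_space}"
    and P :: "'a \<Rightarrow>\<^sub>L 'a"
  assumes P: "bl_invertible P" and "\<theta> \<ge> 0" and "\<Theta> \<ge> 0"
    and res: "norm (P r) \<le> \<theta> * norm (P (bl_adj A (A z)))"
    and cond: "ereal \<theta> * bl_cond (P o\<^sub>L bl_adj A o\<^sub>L A) \<le> ereal \<Theta>"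
  shows "\<exists>z\<^sub>r. bl_adj A (A z\<^sub>r) = r \<and> norm z\<^sub>r \<le> \<Theta> * norm z"
proof (cases "\<theta> = 0")
  case True
  hence "r = 0" using res bl_inv_apply(2)[OF P, of r] by (simp add: blinfun.zero_right)
  thus ?thesis using \<open>\<Theta> \<ge> 0\<close> by (intro exI[of _ 0]) (simp add: blinfun.zero_right)
next
  case False
  define T where "T = P o\<^sub>L bl_adj A o\<^sub>L A"
  have T_inv: "bl_invertible T"
    using cond False \<open>\<theta> \<ge> 0\<close> by (cases "bl_invertible T") (simp_all add: T_def bl_cond_def)
  hence cond_T: "\<theta> * (norm T * norm (bl_inv T)) \<le> \<Theta>"
    using cond by (simp add: T_def bl_cond_def)
  define z\<^sub>r where "z\<^sub>r = bl_inv T (P r)"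
  have "P (bl_adj A (A z\<^sub>r)) = P r" using bl_inv_apply(1)[OF T_inv] by (simp add: z\<^sub>r_def T_def)
  hence "bl_adj A (A z\<^sub>r) = r" by (metis bl_inv_apply(2)[OF P])
  moreover have "norm z\<^sub>r \<le> \<Theta> * norm z"
  proof -
    have "norm z\<^sub>r \<le> norm (bl_inv T) * norm (P r)" unfolding z\<^sub>r_def by (rule norm_blinfun)
    also have "\<dots> \<le> norm (bl_inv T) * (\<theta> * (norm T * norm z))"
      using res norm_blinfun[of T z] \<open>\<theta> \<ge> 0\<close>
      by (intro mult_left_mono) (simp_all add: T_def mult_left_mono order_trans)
    also have "\<dots> = (\<theta> * (norm T * norm (bl_inv T))) * norm z" by (simp add: algebra_simps)
    also have "\<dots> \<le> \<Theta> * norm z" using cond_T by (rule mult_right_mono) simp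
    finally show ?thesis .
  qed
  ultimately show ?thesis by blast
qed

text \<open>Error of one preconditioned step: if \<open>z\<^sub>F\<close> solves the normal equations for \<open>F(x)\<close> and
  \<open>z\<^sub>r\<close> those for the inner residual \<open>r\<close>, then with \<open>M = B\<^sup>-\<^sup>1 A\<^sup>* A\<close> the new error is
  \<open>h + S = (I - M) h - M (z\<^sub>F - h) + M z\<^sub>r\<close>.\<close>
lemma preconditioned_step_error:
  fixes A :: "'a::{real_inner,complete_space} \<Rightarrow>\<^sub>L 'b::{real_inner,complete_space}"
    and B :: "'a \<Rightarrow>\<^sub>L 'a"
  assumes B: "bl_invertible B"
    and bound1: "norm (bl_inv B o\<^sub>L bl_adj A o\<^sub>L A) \<le> \<omega>1"
    and bound2: "norm ((bl_inv B o\<^sub>L bl_adj A o\<^sub>L A) - id_blinfun) \<le> \<omega>2"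
    and zF: "bl_adj A (A zF) = bl_adj A Fx" and zr: "bl_adj A (A zr) = r"
    and step: "B S = - bl_adj A Fx + r"
  shows "norm (h + S) \<le> \<omega>2 * norm h + \<omega>1 * norm (zF - h) + \<omega>1 * norm zr"
proof -
  define M where "M = bl_inv B o\<^sub>L bl_adj A o\<^sub>L A"
  have "S = bl_inv B (B S)" by (simp add: bl_inv_apply(2)[OF B])
  also have "\<dots> = - M zF + M zr"
    by (simp add: step M_def zF zr blinfun.add_right blinfun.minus_right blinfun.diff_right)
  finally have "h + S = - ((M - id_blinfun) h) - M (zF - h) + M zr"
    by (simp add: blinfun.diff_left blinfun.diff_right algebra_simps)
  hence "norm (h + S) \<le> norm ((M - id_blinfun) h) + norm (M (zF - h)) + norm (M zr)"
    using norm_triangle_ineq[of "- ((M - id_blinfun) h) - M (zF - h)" "M zr"]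
      norm_triangle_ineq4[of "- ((M - id_blinfun) h)" "M (zF - h)"] by simp
  also have "\<dots> \<le> \<omega>2 * norm h + \<omega>1 * norm (zF - h) + \<omega>1 * norm zr"
  proof -
    have "norm ((M - id_blinfun) h) \<le> \<omega>2 * norm h" "norm (M v) \<le> \<omega>1 * norm v" for v
      using order_trans[OF norm_blinfun mult_right_mono[OF bound2 norm_ge_zero]]
        order_trans[OF norm_blinfun mult_right_mono[OF bound1 norm_ge_zero]]
      by (simp_all add: M_def)
    thus ?thesis by (meson add_mono)
  qed
  finally show ?thesis .
qed

text \<open>The exact Gauss-Newton correction near a zero-residual direction: \<open>h\<close> is the current
  error, \<open>D\<close> the derivative at the solution, \<open>A\<close> the derivative at the iterate, \<open>F\<^sub>x\<close> the current
  value and \<open>y\<^sub>0\<close> the value at the solution.  The least squares solution \<open>z\<^sub>F\<close> for \<open>F\<^sub>x\<close> differs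
  from \<open>h\<close> by the solutions for \<open>y\<^sub>0\<close> (orthogonal to the range of \<open>D\<close>) and for the Taylor
  remainder; the bound \<open>t\<^sub>0 < 1\<close> on \<open>\<beta> K \<parallel>h\<parallel>\<close> keeps the perturbation \<open>A - D\<close> under control.\<close>
lemma gauss_newton_normal_solution:
  fixes A D :: "'a::{real_inner,complete_space} \<Rightarrow>\<^sub>L 'b::{real_inner,complete_space}"
    and B :: "'a \<Rightarrow>\<^sub>L 'a" and h :: 'a and Fx y0 :: 'b
  assumes D_below: "\<And>z. norm z \<le> \<beta> * norm (D z)" and "\<beta> \<ge> 0"
    and orth_D: "\<And>v. inner (D v) y0 = 0"
    and AD: "norm (A - D) \<le> K * norm h" and "K \<ge> 0"
    and small: "\<beta> * K * norm h \<le> t0" and "t0 < 1"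
    and taylor: "norm (Fx - y0 - A h) \<le> K / 2 * (norm h)^2"
    and B: "bl_invertible B"
    and bound2: "norm ((bl_inv B o\<^sub>L bl_adj A o\<^sub>L A) - id_blinfun) \<le> \<omega>2" and "\<omega>2 < 1"
  shows "\<exists>zF. bl_adj A (A zF) = bl_adj A Fx \<and>
           norm (zF - h) \<le> \<beta> * \<beta> * K * norm h * norm y0 / (1 - t0) + \<beta> * K * (norm h)^2 / (2 * (1 - t0))"
proof -
  define e where "e = norm h"
  define \<delta> where "\<delta> = K * e"
  have "\<delta> \<ge> 0" using \<open>K \<ge> 0\<close> by (simp add: \<delta>_def e_def)
  have \<beta>\<delta>: "\<beta> * \<delta> \<le> t0" "\<beta> * \<delta> < 1" using small \<open>t0 < 1\<close> by (simp_all add: \<delta>_def e_def mult.assoc)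
  have AD': "norm (A - D) \<le> \<delta>" using AD by (simp add: \<delta>_def e_def)
  have shrink: "a / (1 - \<beta> * \<delta>) \<le> a / (1 - t0)" if "a \<ge> 0" for a
    using that \<beta>\<delta> \<open>t0 < 1\<close> by (intro divide_left_mono) (auto intro: mult_pos_pos)
  obtain z1 where z1: "bl_adj A (A z1) = bl_adj A y0"
    using preconditioned_normal_equation_solvable[OF B bound2 \<open>\<omega>2 < 1\<close>] by blast
  have z1_bound: "norm z1 \<le> \<beta> * \<beta> * K * e * norm y0 / (1 - t0)"
  proof -
    have "norm z1 \<le> \<beta> * (\<beta> * \<delta> * norm y0) / (1 - \<beta> * \<delta>)"
      using least_squares_solution_bound_orth[OF D_below \<open>\<beta> \<ge> 0\<close> AD' \<beta>\<delta>(2) \<open>\<delta> \<ge> 0\<close>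
          normal_equation_orthogonal[OF z1] orth_D] .
    also have "\<dots> \<le> \<beta> * (\<beta> * \<delta> * norm y0) / (1 - t0)"
      using \<open>\<beta> \<ge> 0\<close> \<open>\<delta> \<ge> 0\<close> by (intro shrink) simp
    finally show ?thesis by (simp add: \<delta>_def mult_ac)
  qed
  define E where "E = Fx - y0 - A h"
  obtain z2 where z2: "bl_adj A (A z2) = bl_adj A E"
    using preconditioned_normal_equation_solvable[OF B bound2 \<open>\<omega>2 < 1\<close>] by blast
  have z2_bound: "norm z2 \<le> \<beta> * K * e^2 / (2 * (1 - t0))"
  proof -
    have "norm z2 \<le> \<beta> * norm E / (1 - \<beta> * \<delta>)"
      using least_squares_solution_bound[OF D_below \<open>\<beta> \<ge> 0\<close> AD' \<beta>\<delta>(2) normal_equation_orthogonal[OF z2]] .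
    also have "\<dots> \<le> \<beta> * norm E / (1 - t0)" using \<open>\<beta> \<ge> 0\<close> by (intro shrink) simp
    also have "\<dots> \<le> \<beta> * (K / 2 * e^2) / (1 - t0)"
      using taylor \<open>\<beta> \<ge> 0\<close> \<open>t0 < 1\<close> by (intro divide_right_mono mult_left_mono) (simp_all add: E_def e_def)
    finally show ?thesis by simp
  qed
  have "bl_adj A (A (h + z1 + z2)) = bl_adj A Fx"
    using z1 z2 by (simp add: E_def blinfun.add_right blinfun.diff_right)
  moreover have "norm (h + z1 + z2 - h) \<le> norm z1 + norm z2"
    using norm_triangle_ineq[of z1 z2] by (simp add: add.assoc)
  ultimately show ?thesis using z1_bound z2_bound unfolding e_def by force
qed

text \<open>One step of the inexact preconditioned Gauss-Newton method: the preconditioner contributes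
  \<open>\<omega>\<^sub>2 \<parallel>h\<parallel>\<close>, the deviation \<open>d\<close> of the exact correction contributes \<open>\<omega>\<^sub>1 d\<close>, and the inexact inner
  solve contributes \<open>\<omega>\<^sub>1 \<Theta> (\<parallel>h\<parallel> + d)\<close>.\<close>
lemma gauss_newton_step_bound:
  fixes A D :: "'a::{real_inner,complete_space} \<Rightarrow>\<^sub>L 'b::{real_inner,complete_space}"
    and B P :: "'a \<Rightarrow>\<^sub>L 'a" and h S r :: 'a and Fx y0 :: 'b
  assumes D_below: "\<And>z. norm z \<le> \<beta> * norm (D z)" and "\<beta> \<ge> 0"
    and orth_D: "\<And>v. inner (D v) y0 = 0"
    and AD: "norm (A - D) \<le> K * norm h" and "K \<ge> 0"
    and small: "\<beta> * K * norm h \<le> t0" and "t0 < 1"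
    and taylor: "norm (Fx - y0 - A h) \<le> K / 2 * (norm h)^2"
    and B: "bl_invertible B"
    and bound1: "norm (bl_inv B o\<^sub>L bl_adj A o\<^sub>L A) \<le> \<omega>1"
    and bound2: "norm ((bl_inv B o\<^sub>L bl_adj A o\<^sub>L A) - id_blinfun) \<le> \<omega>2" and "\<omega>2 < 1"
    and P: "bl_invertible P" and "\<theta> \<ge> 0" and "\<Theta> \<ge> 0"
    and res: "norm (P r) \<le> \<theta> * norm (P (bl_adj A Fx))"
    and cond: "ereal \<theta> * bl_cond (P o\<^sub>L bl_adj A o\<^sub>L A) \<le> ereal \<Theta>"
    and step: "B S = - bl_adj A Fx + r"
  shows "norm (h + S) \<le> (\<omega>2 + \<omega>1 * \<Theta>) * norm h
          + \<omega>1 * (1 + \<Theta>) * (\<beta> * \<beta> * K * norm h * norm y0 / (1 - t0) + \<beta> * K * (norm h)^2 / (2 * (1 - t0)))"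
proof -
  define d where "d = \<beta> * \<beta> * K * norm h * norm y0 / (1 - t0) + \<beta> * K * (norm h)^2 / (2 * (1 - t0))"
  obtain zF where zF: "bl_adj A (A zF) = bl_adj A Fx" "norm (zF - h) \<le> d"
    using gauss_newton_normal_solution[OF D_below \<open>\<beta> \<ge> 0\<close> orth_D AD \<open>K \<ge> 0\<close> small \<open>t0 < 1\<close>
        taylor B bound2 \<open>\<omega>2 < 1\<close>] unfolding d_def by blast
  obtain zr where zr: "bl_adj A (A zr) = r" "norm zr \<le> \<Theta> * norm zF"
    using inexact_residual_solution[OF P \<open>\<theta> \<ge> 0\<close> \<open>\<Theta> \<ge> 0\<close> _ cond, of r zF] res
    unfolding zF(1) by blast
  have "\<omega>1 \<ge> 0" using bound1 norm_ge_zero order_trans by blast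
  have "norm zF \<le> norm h + d" using zF(2) norm_triangle_ineq[of h "zF - h"] by simp
  hence "norm zr \<le> \<Theta> * (norm h + d)" using zr(2) mult_left_mono[OF _ \<open>\<Theta> \<ge> 0\<close>] by (meson order_trans)
  have "norm (h + S) \<le> \<omega>2 * norm h + \<omega>1 * norm (zF - h) + \<omega>1 * norm zr"
    by (rule preconditioned_step_error[OF B bound1 bound2 zF(1) zr(1) step])
  also have "\<dots> \<le> \<omega>2 * norm h + \<omega>1 * d + \<omega>1 * (\<Theta> * (norm h + d))"
    using zF(2) \<open>norm zr \<le> \<Theta> * (norm h + d)\<close> \<open>\<omega>1 \<ge> 0\<close> by (simp add: add_mono mult_left_mono)
  also have "\<dots> = (\<omega>2 + \<omega>1 * \<Theta>) * norm h + \<omega>1 * (1 + \<Theta>) * d" by (simp add: algebra_simps)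
  finally show ?thesis by (simp add: d_def)
qed

lemma segment_has_vector_derivative:
  assumes "(F has_derivative blinfun_apply (F' (x + s *\<^sub>R h))) (at (x + s *\<^sub>R h))"
  shows "((\<lambda>s. F (x + s *\<^sub>R h)) has_vector_derivative F' (x + s *\<^sub>R h) h) (at s)"
proof -
  have "((\<lambda>s. x + s *\<^sub>R h) has_derivative (\<lambda>u. u *\<^sub>R h)) (at s)"
    by (auto intro!: derivative_eq_intros)
  from has_derivative_compose[OF this assms]
  show ?thesis by (simp add: o_def has_vector_derivative_def blinfun.scaleR_right)
qed

text \<open>Taylor remainder for a map with \<open>K\<close>-Lipschitz derivative, expanded at the endpoint
  \<open>x + h\<close> of the segment: \<open>\<parallel>F(x + h) - F x - F'(x + h) h\<parallel> \<le> K/2 \<parallel>h\<parallel>\<^sup>2\<close>.\<close>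
lemma taylor_remainder_lipschitz:
  fixes F :: "'a::real_normed_vector \<Rightarrow> 'b::real_normed_vector" and F' :: "'a \<Rightarrow> ('a \<Rightarrow>\<^sub>L 'b)"
  assumes deriv: "\<forall>y\<in>U. (F has_derivative blinfun_apply (F' y)) (at y)"
    and lip: "\<forall>y\<in>U. \<forall>z\<in>U. norm (F' y - F' z) \<le> K * norm (y - z)"
    and seg: "\<And>s. s \<in> {0..1} \<Longrightarrow> x + s *\<^sub>R h \<in> U"
  shows "norm (F (x + h) - F x - F' (x + h) h) \<le> K / 2 * (norm h)^2"
proof -
  define f where "f s = F (x + s *\<^sub>R h) - s *\<^sub>R F' (x + h) h" for s :: real
  define f' where "f' s = F' (x + s *\<^sub>R h) h - F' (x + h) h" for s :: real
  define \<phi> where "\<phi> s = K * (norm h)^2 * (s - s^2 / 2)" for s :: real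
  define \<phi>' where "\<phi>' s = K * (norm h)^2 * (1 - s)" for s :: real
  have f_deriv: "(f has_vector_derivative f' s) (at s)" if "s \<in> {0..1}" for s
    unfolding f_def f'_def
    using segment_has_vector_derivative[of F F' x s h] deriv seg[OF that]
    by (auto intro!: derivative_eq_intros)
  have \<phi>_deriv: "(\<phi> has_vector_derivative \<phi>' s) (at s)" for s
    unfolding \<phi>_def \<phi>'_def has_real_derivative_iff_has_vector_derivative[symmetric]
    by (auto intro!: derivative_eq_intros)
  have "norm (f' s) \<le> \<phi>' s" if "0 < s" "s < 1" for s
  proof -
    have "norm (f' s) \<le> norm (F' (x + s *\<^sub>R h) - F' (x + h)) * norm h"
      unfolding f'_def blinfun.diff_left[symmetric] by (rule norm_blinfun)
    also have "norm (F' (x + s *\<^sub>R h) - F' (x + h)) \<le> K * norm ((x + s *\<^sub>R h) - (x + h))"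
      using lip seg that by (metis atLeastAtMost_iff less_eq_real_def scaleR_one zero_le_one order_refl)
    also have "(x + s *\<^sub>R h) - (x + h) = - ((1 - s) *\<^sub>R h)" by (simp add: algebra_simps)
    hence "norm ((x + s *\<^sub>R h) - (x + h)) = (1 - s) * norm h" using that by simp
    finally show ?thesis
      by (simp add: \<phi>'_def power2_eq_square mult_right_mono algebra_simps)
  qed
  moreover have "continuous_on {0..1} f" "continuous_on {0..1} \<phi>"
    using f_deriv \<phi>_deriv
    by (meson continuous_at_imp_continuous_on has_vector_derivative_continuous)+
  ultimately have "norm (f 1 - f 0) \<le> \<phi> 1 - \<phi> 0"
    using f_deriv \<phi>_deriv by (intro differentiable_bound_general[of 0 1 f \<phi> f' \<phi>']) auto
  thus ?thesis by (simp add: f_def \<phi>_def algebra_simps)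
qed

text \<open>Rearranging the step bound into the form of the main theorem only needs \<open>1 \<le> \<surd>2\<close>.\<close>
lemma step_bound_normal_form:
  fixes e c \<beta> K \<Theta> \<omega>1 \<omega>2 t0 :: real
  assumes "0 \<le> \<omega>1" "0 \<le> \<beta>" "0 \<le> K" "0 \<le> \<Theta>" "0 \<le> c" "0 \<le> e" "t0 < 1"
  shows "(\<omega>2 + \<omega>1 * \<Theta>) * e + \<omega>1 * (1 + \<Theta>) *
           (\<beta> * \<beta> * K * e * c / (1 - t0) + \<beta> * K * e^2 / (2 * (1 - t0)))
         \<le> (1 + \<Theta>) * \<beta> * \<omega>1 * K / (2 * (1 - t0)) * e\<^sup>2
           + ((1 + \<Theta>) * \<omega>1 * sqrt 2 * c * \<beta>\<^sup>2 * K / (1 - t0) + \<omega>1 * \<Theta> + \<omega>2) * e"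
proof -
  define u where "u = 1 / (1 - t0)"
  define X where "X = \<omega>1 * (1 + \<Theta>) * (\<beta> * \<beta> * K * e * c * u)"
  have "X \<ge> 0" using assms by (simp add: X_def u_def)
  hence "X \<le> sqrt 2 * X" by (simp add: mult_le_cancel_right1)
  have div: "a / (1 - t0) = a * u" "a / (2 * (1 - t0)) = a * u / 2" for a
    by (simp_all add: u_def)
  have "(\<omega>2 + \<omega>1 * \<Theta>) * e + \<omega>1 * (1 + \<Theta>) *
      (\<beta> * \<beta> * K * e * c / (1 - t0) + \<beta> * K * e^2 / (2 * (1 - t0)))
      = (\<omega>1 * \<Theta> + \<omega>2) * e + (1 + \<Theta>) * \<beta> * \<omega>1 * K / (2 * (1 - t0)) * e\<^sup>2 + X"
    "(1 + \<Theta>) * \<beta> * \<omega>1 * K / (2 * (1 - t0)) * e\<^sup>2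
      + ((1 + \<Theta>) * \<omega>1 * sqrt 2 * c * \<beta>\<^sup>2 * K / (1 - t0) + \<omega>1 * \<Theta> + \<omega>2) * e
      = (\<omega>1 * \<Theta> + \<omega>2) * e + (1 + \<Theta>) * \<beta> * \<omega>1 * K / (2 * (1 - t0)) * e\<^sup>2 + sqrt 2 * X"
    by (simp_all only: X_def div) (simp_all add: algebra_simps power2_eq_square)
  with \<open>X \<le> sqrt 2 * X\<close> show ?thesis by linarith
qed

lemma gauss_newton_local_step:
  fixes F :: "'a::{real_inner,complete_space} \<Rightarrow> 'b::{real_inner,complete_space}"
    and F' :: "'a \<Rightarrow> ('a \<Rightarrow>\<^sub>L 'b)" and B P :: "'a \<Rightarrow>\<^sub>L 'a"
  assumes deriv: "\<forall>y\<in>ball xs \<kappa>. (F has_derivative blinfun_apply (F' y)) (at y)"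
    and lip: "\<forall>y\<in>ball xs \<kappa>. \<forall>z\<in>ball xs \<kappa>. norm (F' y - F' z) \<le> K * norm (y - z)"
    and D_below: "\<And>z. norm z \<le> \<beta> * norm (F' xs z)" and "\<beta> \<ge> 0"
    and orth: "\<And>v. inner (F' xs v) (F xs) = 0" and "K \<ge> 0"
    and near: "norm (x - xs) \<le> e0" and "e0 < \<kappa>" and small: "\<beta> * K * e0 < 1"
    and B: "bl_invertible B"
    and bound1: "norm (bl_inv B o\<^sub>L bl_adj (F' x) o\<^sub>L F' x) \<le> \<omega>1"
    and bound2: "norm ((bl_inv B o\<^sub>L bl_adj (F' x) o\<^sub>L F' x) - id_blinfun) \<le> \<omega>2" and "\<omega>2 < 1"
    and P: "bl_invertible P" and "\<theta> \<ge> 0" and "\<Theta> \<ge> 0"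
    and res: "norm (P r) \<le> \<theta> * norm (P (bl_adj (F' x) (F x)))"
    and cond: "ereal \<theta> * bl_cond (P o\<^sub>L bl_adj (F' x) o\<^sub>L F' x) \<le> ereal \<Theta>"
    and step: "B S = - bl_adj (F' x) (F x) + r"
  shows "norm (x + S - xs) \<le> (1 + \<Theta>) * \<beta> * \<omega>1 * K / (2 * (1 - \<beta> * K * e0)) * (norm (x - xs))\<^sup>2
           + ((1 + \<Theta>) * \<omega>1 * sqrt 2 * norm (F xs) * \<beta>\<^sup>2 * K / (1 - \<beta> * K * e0) + \<omega>1 * \<Theta> + \<omega>2)
             * norm (x - xs)"
proof -
  define h where "h = x - xs"
  define t0 where "t0 = \<beta> * K * e0"
  have in_ball: "xs + s *\<^sub>R h \<in> ball xs \<kappa>" if "s \<in> {0..1}" for s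
  proof -
    have "norm (s *\<^sub>R h) \<le> norm h" using that by (simp add: mult_left_le_one_le)
    moreover have "dist xs (xs + s *\<^sub>R h) = norm (s *\<^sub>R h)" by (simp add: dist_norm)
    ultimately show ?thesis using near \<open>e0 < \<kappa>\<close> by (simp add: h_def)
  qed
  have "x \<in> ball xs \<kappa>" "xs \<in> ball xs \<kappa>" using in_ball[of 1] in_ball[of 0] by (simp_all add: h_def)
  hence "norm (F' x - F' xs) \<le> K * norm h" using lip by (simp add: h_def)
  moreover have "\<beta> * K * norm h \<le> t0"
    using near \<open>\<beta> \<ge> 0\<close> \<open>K \<ge> 0\<close> by (simp add: t0_def h_def mult_left_mono)
  moreover have "norm (F x - F xs - F' x h) \<le> K / 2 * (norm h)\<^sup>2"
    using taylor_remainder_lipschitz[OF deriv lip in_ball] by (simp add: h_def)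
  ultimately have "norm (h + S) \<le> (\<omega>2 + \<omega>1 * \<Theta>) * norm h + \<omega>1 * (1 + \<Theta>) *
      (\<beta> * \<beta> * K * norm h * norm (F xs) / (1 - t0) + \<beta> * K * (norm h)^2 / (2 * (1 - t0)))"
    using small \<open>\<beta> \<ge> 0\<close> \<open>K \<ge> 0\<close>
    by (intro gauss_newton_step_bound[OF D_below _ orth _ _ _ _ _ B bound1 bound2 \<open>\<omega>2 < 1\<close> P
          \<open>\<theta> \<ge> 0\<close> \<open>\<Theta> \<ge> 0\<close> res cond step]) (simp_all add: t0_def)
  also have "\<dots> \<le> (1 + \<Theta>) * \<beta> * \<omega>1 * K / (2 * (1 - t0)) * (norm h)\<^sup>2
           + ((1 + \<Theta>) * \<omega>1 * sqrt 2 * norm (F xs) * \<beta>\<^sup>2 * K / (1 - t0) + \<omega>1 * \<Theta> + \<omega>2) * norm h"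
  proof (rule step_bound_normal_form)
    show "0 \<le> \<omega>1" using bound1 norm_ge_zero order_trans by blast
    show "t0 < 1" using small by (simp add: t0_def)
  qed (use \<open>\<beta> \<ge> 0\<close> \<open>K \<ge> 0\<close> \<open>\<Theta> \<ge> 0\<close> in simp_all)
  finally show ?thesis by (simp add: h_def t0_def algebra_simps)
qed

text \<open>The contraction factor of the error recursion at the initial radius is below one.
  This is where the choice of the radius \<open>r\<close> in the theorem comes from.\<close>
lemma contraction_factor_lt_one:
  fixes \<alpha> \<beta> K e0 \<Theta> \<omega>1 \<omega>2 :: real
  assumes "\<beta> > 0" "K > 0" "e0 \<ge> 0" "\<alpha> \<ge> 0" "\<Theta> \<ge> 0" "\<omega>2 \<ge> 0" "\<omega>2 < \<omega>1"
    and cond: "\<omega>1 * (\<alpha> + \<alpha> * \<Theta> + \<Theta>) + \<omega>2 < 1"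
    and radius: "e0 < (2 * (1 - \<omega>1 * \<Theta> - \<omega>2) - 2 * \<alpha> * \<omega>1 * (1 + \<Theta>))
                      / (\<beta> * K * (2 + \<omega>1 - \<Theta> * \<omega>1 - 2 * \<omega>2))"
  shows "\<beta> * K * e0 < 1"
    and "(1 + \<Theta>) * \<beta> * \<omega>1 * K / (2 * (1 - \<beta> * K * e0)) * e0
         + ((1 + \<Theta>) * \<omega>1 * \<alpha> / (1 - \<beta> * K * e0) + \<omega>1 * \<Theta> + \<omega>2) < 1"
proof -
  define t0 where "t0 = \<beta> * K * e0"
  define N where "N = 2 * (1 - \<omega>1 * \<Theta> - \<omega>2) - 2 * \<alpha> * \<omega>1 * (1 + \<Theta>)"
  define Dn where "Dn = 2 + \<omega>1 - \<Theta> * \<omega>1 - 2 * \<omega>2"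
  have "N > 0" using cond by (simp add: N_def algebra_simps)
  have "Dn - N = \<omega>1 * (1 + \<Theta>) * (1 + 2 * \<alpha>)" by (simp add: N_def Dn_def algebra_simps)
  moreover have "\<omega>1 * (1 + \<Theta>) * (1 + 2 * \<alpha>) > 0" using assms by simp
  ultimately have "N < Dn" by linarith
  hence "Dn > 0" using \<open>N > 0\<close> by linarith
  have "t0 * Dn < N"
    using radius \<open>Dn > 0\<close> assms(1,2) by (simp add: t0_def N_def Dn_def pos_less_divide_eq mult_ac)
  hence "t0 * Dn < 1 * Dn" using \<open>N < Dn\<close> by linarith
  hence "t0 < 1" using \<open>Dn > 0\<close> by (simp only: mult_less_cancel_right)
  thus "\<beta> * K * e0 < 1" by (simp add: t0_def)
  \<comment> \<open>Clearing the denominator \<open>2 (1 - t\<^sub>0)\<close>, the claim is exactly \<open>t\<^sub>0 Dn < N\<close>.\<close>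
  define P where "P = (1 + \<Theta>) * \<omega>1 * t0 + 2 * (1 + \<Theta>) * \<omega>1 * \<alpha>"
  have "P < (1 - \<omega>1 * \<Theta> - \<omega>2) * (2 * (1 - t0))"
    using \<open>t0 * Dn < N\<close> by (simp add: P_def N_def Dn_def algebra_simps)
  hence "P / (2 * (1 - t0)) < 1 - \<omega>1 * \<Theta> - \<omega>2"
    using \<open>t0 < 1\<close> by (simp add: pos_divide_less_eq)
  moreover have "(1 + \<Theta>) * \<beta> * \<omega>1 * K / (2 * (1 - t0)) * e0 = (1 + \<Theta>) * \<omega>1 * t0 / (2 * (1 - t0))"
    by (simp add: t0_def mult_ac)
  moreover have "(1 + \<Theta>) * \<omega>1 * t0 / (2 * (1 - t0)) + (1 + \<Theta>) * \<omega>1 * \<alpha> / (1 - t0)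
      = P / (2 * (1 - t0))"
    unfolding P_def add_divide_distrib by (simp only: mult.assoc mult_divide_mult_cancel_left_if) simp
  ultimately show "(1 + \<Theta>) * \<beta> * \<omega>1 * K / (2 * (1 - \<beta> * K * e0)) * e0
         + ((1 + \<Theta>) * \<omega>1 * \<alpha> / (1 - \<beta> * K * e0) + \<omega>1 * \<Theta> + \<omega>2) < 1"
    unfolding t0_def by linarith
qed

lemma quadratic_error_recursion:
  fixes e :: "nat \<Rightarrow> real"
  assumes nonneg: "\<And>k. e k \<ge> 0" and start: "e 0 \<le> e0"
    and rec: "\<And>k. e k \<le> e0 \<Longrightarrow> e (Suc k) \<le> a * (e k)\<^sup>2 + b * e k"
    and "a \<ge> 0" "b \<ge> 0" and factor: "a * e0 + b < 1"
  shows "\<forall>k. e k \<le> e0" and "e \<longlonglongrightarrow> 0"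
proof -
  define q where "q = a * e0 + b"
  have "e0 \<ge> 0" using nonneg start order_trans by blast
  hence "q \<ge> 0" using assms by (simp add: q_def)
  have below_e0: "q^k * e0 \<le> e0" for k
    using \<open>q \<ge> 0\<close> factor \<open>e0 \<ge> 0\<close> by (simp add: q_def mult_left_le_one_le power_le_one)
  have geometric: "e k \<le> q^k * e0" for k
  proof (induction k)
    case 0 thus ?case using start by simp
  next
    case (Suc k)
    hence "e k \<le> e0" using below_e0[of k] by linarith
    hence "e (Suc k) \<le> (a * e k + b) * e k" using rec by (simp add: power2_eq_square algebra_simps)
    also have "\<dots> \<le> q * e k"
      using \<open>e k \<le> e0\<close> \<open>a \<ge> 0\<close> nonneg[of k] by (simp add: q_def mult_right_mono mult_left_mono)
    also have "\<dots> \<le> q * (q^k * e0)" using Suc.IH \<open>q \<ge> 0\<close> by (rule mult_left_mono)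
    finally show ?case by simp
  qed
  show "\<forall>k. e k \<le> e0"
    using geometric below_e0 order_trans by blast
  show "e \<longlonglongrightarrow> 0"
  proof (rule Lim_null_comparison)
    show "\<forall>\<^sub>F k in sequentially. norm (e k) \<le> q^k * e0" using geometric nonneg by simp
    show "(\<lambda>k. q^k * e0) \<longlonglongrightarrow> 0"
      using \<open>q \<ge> 0\<close> factor by (intro tendsto_mult_left_zero LIMSEQ_power_zero) (simp add: q_def)
  qed
qed

text \<open>The ball of radius \<open>\<kappa> = sup {t \<in> [0, R). B(x\<^sub>*, t) \<subseteq> \<Omega>}\<close> lies in \<open>\<Omega>\<close>, so the Lipschitz
  hypothesis on \<open>B(x\<^sub>*, \<kappa>)\<close> comes with differentiability there.\<close>
lemma admissible_radius:
  fixes xs :: "'a::metric_space"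
  assumes "R > 0"
  shows "ball xs (Sup {t. 0 \<le> t \<and> t < R \<and> ball xs t \<subseteq> \<Omega>}) \<subseteq> \<Omega>"
proof
  define T where "T = {t. 0 \<le> t \<and> t < R \<and> ball xs t \<subseteq> \<Omega>}"
  have "0 \<in> T" using assms by (simp add: T_def)
  fix y assume "y \<in> ball xs (Sup {t. 0 \<le> t \<and> t < R \<and> ball xs t \<subseteq> \<Omega>})"
  hence "dist xs y < Sup T" by (simp add: T_def)
  then obtain t where "t \<in> T" "dist xs y < t" using less_cSupD[of T] \<open>0 \<in> T\<close> by blast
  thus "y \<in> \<Omega>" by (auto simp: T_def)
qed

lemma inexact_gauss_newton_convergence:
  fixes F :: "'a::{real_inner,complete_space} \<Rightarrow> 'b::{real_inner,complete_space}"
    and F' :: "'a \<Rightarrow> ('a \<Rightarrow>\<^sub>L 'b)" and x S r :: "nat \<Rightarrow> 'a"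
    and B P :: "nat \<Rightarrow> ('a \<Rightarrow>\<^sub>L 'a)" and \<theta> :: "nat \<Rightarrow> real"
    and xs :: 'a and \<beta> K :: real
  defines "\<alpha> \<equiv> sqrt 2 * norm (F xs) * \<beta>\<^sup>2 * K"
  assumes deriv: "\<forall>y\<in>ball xs \<kappa>. (F has_derivative blinfun_apply (F' y)) (at y)"
    and lip: "\<forall>y\<in>ball xs \<kappa>. \<forall>z\<in>ball xs \<kappa>. norm (F' y - F' z) \<le> K * norm (y - z)"
    and D_below: "\<And>z. norm z \<le> \<beta> * norm (F' xs z)" and "\<beta> > 0"
    and orth: "\<And>v. inner (F' xs v) (F xs) = 0" and "K > 0"
    and "0 \<le> \<Theta>" "0 \<le> \<omega>2" "\<omega>2 < \<omega>1"
    and cond: "\<omega>1 * (\<alpha> + \<alpha> * \<Theta> + \<Theta>) + \<omega>2 < 1"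
    and near: "norm (x 0 - xs) < \<kappa>"
    and radius: "norm (x 0 - xs) < (2 * (1 - \<omega>1 * \<Theta> - \<omega>2) - 2 * \<alpha> * \<omega>1 * (1 + \<Theta>))
                                    / (\<beta> * K * (2 + \<omega>1 - \<Theta> * \<omega>1 - 2 * \<omega>2))"
    and step: "\<And>k. x (Suc k) = x k + S k"
    and newton: "\<And>k. B k (S k) = - bl_adj (F' (x k)) (F (x k)) + r k"
    and B_inv: "\<And>k. bl_invertible (B k)"
    and B_om1: "\<And>k. norm (bl_inv (B k) o\<^sub>L bl_adj (F' (x k)) o\<^sub>L F' (x k)) \<le> \<omega>1"
    and B_om2: "\<And>k. norm ((bl_inv (B k) o\<^sub>L bl_adj (F' (x k)) o\<^sub>L F' (x k)) - id_blinfun) \<le> \<omega>2"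
    and P_inv: "\<And>k. bl_invertible (P k)"
    and theta_nn: "\<And>k. \<theta> k \<ge> 0"
    and resid: "\<And>k. norm (P k (r k)) \<le> \<theta> k * norm (P k (bl_adj (F' (x k)) (F (x k))))"
    and cond_bnd: "\<And>k. ereal (\<theta> k) * bl_cond (P k o\<^sub>L bl_adj (F' (x k)) o\<^sub>L F' (x k)) \<le> ereal \<Theta>"
  shows "\<forall>k. norm (x k - xs) \<le> norm (x 0 - xs)" and "x \<longlonglongrightarrow> xs"
    and "\<forall>k. norm (x (Suc k) - xs) \<le>
             (1 + \<Theta>) * \<beta> * \<omega>1 * K / (2 * (1 - \<beta> * K * norm (x 0 - xs))) * (norm (x k - xs))\<^sup>2
           + ((1 + \<Theta>) * \<omega>1 * sqrt 2 * norm (F xs) * \<beta>\<^sup>2 * K / (1 - \<beta> * K * norm (x 0 - xs))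
              + \<omega>1 * \<Theta> + \<omega>2) * norm (x k - xs)"
proof -
  define e0 where "e0 = norm (x 0 - xs)"
  define a where "a = (1 + \<Theta>) * \<beta> * \<omega>1 * K / (2 * (1 - \<beta> * K * e0))"
  define b where "b = (1 + \<Theta>) * \<omega>1 * sqrt 2 * norm (F xs) * \<beta>\<^sup>2 * K / (1 - \<beta> * K * e0) + \<omega>1 * \<Theta> + \<omega>2"
  have "\<alpha> \<ge> 0" using \<open>K > 0\<close> by (simp add: \<alpha>_def)
  have "\<omega>1 > 0" using \<open>0 \<le> \<omega>2\<close> \<open>\<omega>2 < \<omega>1\<close> by linarith
  hence "\<omega>2 < 1" using cond \<open>\<alpha> \<ge> 0\<close> \<open>0 \<le> \<Theta>\<close> by (smt (verit) mult_nonneg_nonneg)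
  have b_eq: "b = (1 + \<Theta>) * \<omega>1 * \<alpha> / (1 - \<beta> * K * e0) + \<omega>1 * \<Theta> + \<omega>2"
    by (simp add: b_def \<alpha>_def mult_ac)
  have factor: "\<beta> * K * e0 < 1" "a * e0 + b < 1"
    using contraction_factor_lt_one[OF \<open>\<beta> > 0\<close> \<open>K > 0\<close> _ \<open>\<alpha> \<ge> 0\<close> \<open>0 \<le> \<Theta>\<close> \<open>0 \<le> \<omega>2\<close> \<open>\<omega>2 < \<omega>1\<close>
        cond radius[folded e0_def]]
    by (simp_all add: a_def b_eq e0_def)
  have "a \<ge> 0" "b \<ge> 0" using factor(1) \<open>\<beta> > 0\<close> \<open>\<omega>1 > 0\<close> \<open>\<alpha> \<ge> 0\<close> \<open>K > 0\<close> \<open>0 \<le> \<Theta>\<close> \<open>0 \<le> \<omega>2\<close>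
    by (simp_all add: a_def b_eq)
  have one_step: "norm (x (Suc k) - xs) \<le> a * (norm (x k - xs))\<^sup>2 + b * norm (x k - xs)"
    if "norm (x k - xs) \<le> e0" for k
    using gauss_newton_local_step[OF deriv lip D_below _ orth _ that near[folded e0_def] factor(1)
        B_inv B_om1 B_om2 \<open>\<omega>2 < 1\<close> P_inv theta_nn \<open>0 \<le> \<Theta>\<close> resid cond_bnd newton]
      step \<open>\<beta> > 0\<close> \<open>K > 0\<close>
    by (simp add: a_def b_def algebra_simps)
  have "norm (x 0 - xs) \<le> e0" by (simp add: e0_def)
  note error = quadratic_error_recursion[OF norm_ge_zero this one_step \<open>a \<ge> 0\<close> \<open>b \<ge> 0\<close> factor(2)]
  show "\<forall>k. norm (x k - xs) \<le> norm (x 0 - xs)" using error(1) by (simp add: e0_def)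
  show "x \<longlonglongrightarrow> xs" using error(2) by (simp add: tendsto_norm_zero_iff LIM_zero_iff)
  show "\<forall>k. norm (x (Suc k) - xs) \<le>
             (1 + \<Theta>) * \<beta> * \<omega>1 * K / (2 * (1 - \<beta> * K * norm (x 0 - xs))) * (norm (x k - xs))\<^sup>2
           + ((1 + \<Theta>) * \<omega>1 * sqrt 2 * norm (F xs) * \<beta>\<^sup>2 * K / (1 - \<beta> * K * norm (x 0 - xs))
              + \<omega>1 * \<Theta> + \<omega>2) * norm (x k - xs)"
    using one_step error(1) unfolding a_def b_def e0_def by simp
qed

text \<open>The main theorem: the radius \<open>\<kappa>\<close> is admissible, \<open>\<beta> = \<parallel>F'(x\<^sub>*)\<^sup>\<dagger>\<parallel>\<close> bounds the left inverse of
  \<open>F'(x\<^sub>*)\<close>, and the critical point condition makes \<open>F(x\<^sub>*)\<close> orthogonal to the range of \<open>F'(x\<^sub>*)\<close>;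
  then \<open>inexact_gauss_newton_convergence\<close> applies.\<close>
theorem mainTheorem11:
  fixes F :: "'a::{real_inner, complete_space} \<Rightarrow> 'b::{real_inner, complete_space}"
    and F' :: "'a \<Rightarrow> ('a \<Rightarrow>\<^sub>L 'b)"
    and \<Omega> :: "'a set"
    and xs :: 'a and R K \<Theta> \<omega>1 \<omega>2 :: real
    and x S r :: "nat \<Rightarrow> 'a"
    and B P :: "nat \<Rightarrow> ('a \<Rightarrow>\<^sub>L 'a)"
    and \<theta> :: "nat \<Rightarrow> real"
  assumes open_\<Omega>: "open \<Omega>"
    and deriv: "\<forall>y\<in>\<Omega>. (F has_derivative blinfun_apply (F' y)) (at y)"
    and cont_deriv: "continuous_on \<Omega> F'"
    and closed_img: "\<forall>y\<in>\<Omega>. closed (range (blinfun_apply (F' y)))"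
    and xs_in: "xs \<in> \<Omega>"
    and R_pos: "R > 0"
    and crit: "bl_adj (F' xs) (F xs) = 0"
    and inj: "inj (blinfun_apply (F' xs))"
    and K_pos: "K > 0"
    and alpha_lt: "sqrt 2 * norm (F xs) * (norm (bl_pinv (F' xs)))\<^sup>2 * K < 1"
    and lip: "\<forall>y\<in>ball xs (Sup {t. 0 \<le> t \<and> t < R \<and> ball xs t \<subseteq> \<Omega>}).
              \<forall>z\<in>ball xs (Sup {t. 0 \<le> t \<and> t < R \<and> ball xs t \<subseteq> \<Omega>}).
                norm (F' y - F' z) \<le> K * norm (y - z)"
    and theta_bnd: "0 \<le> \<Theta>" "\<Theta> < 1"
    and omega_bnd: "0 \<le> \<omega>2" "\<omega>2 < \<omega>1"
    and omega_cond: "\<omega>1 * (sqrt 2 * norm (F xs) * (norm (bl_pinv (F' xs)))\<^sup>2 * K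
                        + sqrt 2 * norm (F xs) * (norm (bl_pinv (F' xs)))\<^sup>2 * K * \<Theta> + \<Theta>) + \<omega>2 < 1"
    and x0: "x 0 \<in> ball xs (min (Sup {t. 0 \<le> t \<and> t < R \<and> ball xs t \<subseteq> \<Omega>})
               ((2 * (1 - \<omega>1 * \<Theta> - \<omega>2) - 2 * sqrt 2 * norm (F xs) * K * (norm (bl_pinv (F' xs)))\<^sup>2 * \<omega>1 * (1 + \<Theta>))
                / (norm (bl_pinv (F' xs)) * K * (2 + \<omega>1 - \<Theta> * \<omega>1 - 2 * \<omega>2))))"
    and x0_ne: "x 0 \<noteq> xs"
    and step: "\<forall>k. x (Suc k) = x k + S k"
    and newton: "\<forall>k. B k (S k) = - bl_adj (F' (x k)) (F (x k)) + r k"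
    and B_inv: "\<forall>k. bl_invertible (B k)"
    and B_om1: "\<forall>k. norm (bl_inv (B k) o\<^sub>L bl_adj (F' (x k)) o\<^sub>L F' (x k)) \<le> \<omega>1"
    and B_om2: "\<forall>k. norm ((bl_inv (B k) o\<^sub>L bl_adj (F' (x k)) o\<^sub>L F' (x k)) - id_blinfun) \<le> \<omega>2"
    and P_inv: "\<forall>k. bl_invertible (P k)"
    and theta_nn: "\<forall>k. \<theta> k \<ge> 0"
    and resid: "\<forall>k. norm (P k (r k)) \<le> \<theta> k * norm (P k (bl_adj (F' (x k)) (F (x k))))"
    and cond_bnd: "\<forall>k. ereal (\<theta> k) * bl_cond (P k o\<^sub>L bl_adj (F' (x k)) o\<^sub>L F' (x k)) \<le> ereal \<Theta>"
  shows "(\<forall>k. x k \<in> ball xs (min (Sup {t. 0 \<le> t \<and> t < R \<and> ball xs t \<subseteq> \<Omega>})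
               ((2 * (1 - \<omega>1 * \<Theta> - \<omega>2) - 2 * sqrt 2 * norm (F xs) * K * (norm (bl_pinv (F' xs)))\<^sup>2 * \<omega>1 * (1 + \<Theta>))
                / (norm (bl_pinv (F' xs)) * K * (2 + \<omega>1 - \<Theta> * \<omega>1 - 2 * \<omega>2)))))
       \<and> x \<longlonglongrightarrow> xs
       \<and> (\<forall>k. norm (x (Suc k) - xs) \<le>
             (1 + \<Theta>) * norm (bl_pinv (F' xs)) * \<omega>1 * K
               / (2 * (1 - norm (bl_pinv (F' xs)) * K * norm (x 0 - xs))) * (norm (x k - xs))\<^sup>2
           + ((1 + \<Theta>) * \<omega>1 * sqrt 2 * norm (F xs) * (norm (bl_pinv (F' xs)))\<^sup>2 * K
                / (1 - norm (bl_pinv (F' xs)) * K * norm (x 0 - xs))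
              + \<omega>1 * \<Theta> + \<omega>2) * norm (x k - xs))"
proof -
  define \<kappa> where "\<kappa> = Sup {t. 0 \<le> t \<and> t < R \<and> ball xs t \<subseteq> \<Omega>}"
  define \<beta> where "\<beta> = norm (bl_pinv (F' xs))"
  have "ball xs \<kappa> \<subseteq> \<Omega>" unfolding \<kappa>_def by (rule admissible_radius[OF R_pos])
  hence deriv_\<kappa>: "\<forall>y\<in>ball xs \<kappa>. (F has_derivative blinfun_apply (F' y)) (at y)" using deriv by blast
  have D_below: "norm z \<le> \<beta> * norm (F' xs z)" for z
    unfolding \<beta>_def using pinv_left_inverse_bound[OF inj] closed_img xs_in by blast
  have "\<beta> > 0"
  proof (rule ccontr)
    assume "\<not> \<beta> > 0"
    hence "\<beta> = 0" by (simp add: \<beta>_def)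
    thus False using D_below[of "x 0 - xs"] x0_ne by simp
  qed
  have orth: "inner (F' xs v) (F xs) = 0" for v by (simp add: bl_adj_inner crit)
  have near: "norm (x 0 - xs) < \<kappa>" and radius: "norm (x 0 - xs) < (2 * (1 - \<omega>1 * \<Theta> - \<omega>2)
      - 2 * (sqrt 2 * norm (F xs) * \<beta>\<^sup>2 * K) * \<omega>1 * (1 + \<Theta>)) / (\<beta> * K * (2 + \<omega>1 - \<Theta> * \<omega>1 - 2 * \<omega>2))"
    using x0 by (simp_all add: \<kappa>_def \<beta>_def dist_norm norm_minus_commute mult_ac)
  have cond: "\<omega>1 * (sqrt 2 * norm (F xs) * \<beta>\<^sup>2 * K + sqrt 2 * norm (F xs) * \<beta>\<^sup>2 * K * \<Theta> + \<Theta>) + \<omega>2 < 1"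
    using omega_cond by (simp add: \<beta>_def)
  note convergence = inexact_gauss_newton_convergence[OF deriv_\<kappa> lip[folded \<kappa>_def] D_below \<open>\<beta> > 0\<close>
      orth K_pos theta_bnd(1) omega_bnd cond near radius step[rule_format] newton[rule_format]
      B_inv[rule_format] B_om1[rule_format] B_om2[rule_format] P_inv[rule_format] theta_nn[rule_format]
      resid[rule_format] cond_bnd[rule_format]]
  have "\<forall>k. dist xs (x k) \<le> dist xs (x 0)" using convergence(1) by (simp add: dist_norm norm_minus_commute)
  thus ?thesis using x0 convergence(2,3) unfolding \<beta>_def by (auto simp del: min_less_iff_conj intro: le_less_trans)
qed

end
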